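(* Let $f\in C[-1,1]$ be absolutely continuous with formal Chebyshev series $f\sim\sum_{n=0}^\infty a_nT_n$. If both $\mathcal D^0_+f$ and $\mathcal D^0_-f$ belong to $C[-1,1]$, then the formal Legendre series $\mathcal D^0_+f\sim\sum_{n=0}^\infty b_nP_n$ has coefficients $b_n=(n+1)\pi a_{n+1}$ for all $n\ge0$, and the formal Legendre series $\mathcal D^0_-f\sim\sum_{n=0}^\infty c_nP_n$ has coefficients $c_n=n\pi a_n$ for all $n\ge0$.
   Context: $T_n$ are the Chebyshev polynomials of the first kind and $P_n$ the Legendre polynomials. The formal Chebyshev series has coefficients $a_0=\frac1\pi\int_{-1}^1 f(t)(1-t^2)^{-1/2}dt$, $a_n=\frac2\pi\int_{-1}^1 f(t)T_n(t)(1-t^2)^{-1/2}dt$ ($n\ge1$); the formal Legendre series of $g$ has coefficients $\frac{2n+1}{2}\int_{-1}^1 g P_n$. For $f$ absolutely continuous and $\lambda\ge0$: $D^\lambda_+f(x)=(1+x)\frac{d}{dx}\Big\{(1+x)^{-\lambda}\int_{-1}^x(x-\tau)^{-1/2}(1+\tau)^{\lambda-1/2}f(\tau)\,d\tau\Big\}$, $D^\lambda_-f(x)=(1-x)\frac{d}{dx}\Big\{(1-x)^{-\lambda}\int_x^1(\tau-x)^{-1/2}(1-\tau)^{\lambda-1/2}f(\tau)\,d\tau\Big\}$, $\mathcal D^\lambda_\pm=D^\lambda_+\pm D^\lambda_-$; here $\lambda=0$. *)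

theory Defs
  imports "HOL-Analysis.Analysis"
begin

definition abs_cont_on_interval :: "real \<Rightarrow> real \<Rightarrow> (real \<Rightarrow> real) \<Rightarrow> bool" where
  "abs_cont_on_interval a b f \<longleftrightarrow>
     (\<forall>\<epsilon>>0. \<exists>\<delta>>0. \<forall>(n::nat) (u::nat \<Rightarrow> real) (v::nat \<Rightarrow> real).
        (\<forall>i<n. a \<le> u i \<and> u i \<le> v i \<and> v i \<le> b) \<and>
        (\<forall>i<n. \<forall>j<n. i \<noteq> j \<longrightarrow> v i \<le> u j \<or> v j \<le> u i) \<and>
        (\<Sum>i<n. v i - u i) < \<delta>
        \<longrightarrow> (\<Sum>i<n. \<bar>f (v i) - f (u i)\<bar>) < \<epsilon>)"

fun chebT :: "nat \<Rightarrow> real \<Rightarrow> real" where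
  "chebT 0 x = 1"
| "chebT (Suc 0) x = x"
| "chebT (Suc (Suc n)) x = 2 * x * chebT (Suc n) x - chebT n x"

fun legP :: "nat \<Rightarrow> real \<Rightarrow> real" where
  "legP 0 x = 1"
| "legP (Suc 0) x = x"
| "legP (Suc (Suc n)) x =
     ((2 * real n + 3) * x * legP (Suc n) x - (real n + 1) * legP n x) / (real n + 2)"

definition cheb_coeff :: "(real \<Rightarrow> real) \<Rightarrow> nat \<Rightarrow> real" where
  "cheb_coeff f n =
     (if n = 0 then 1 / pi else 2 / pi) *
     integral {-1..1} (\<lambda>t. f t * chebT n t * (1 - t\<^sup>2) powr (-1/2))"

definition leg_coeff :: "(real \<Rightarrow> real) \<Rightarrow> nat \<Rightarrow> real" where
  "leg_coeff g n = (2 * real n + 1) / 2 * integral {-1..1} (\<lambda>t. g t * legP n t)"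

definition Dplus_inner :: "real \<Rightarrow> (real \<Rightarrow> real) \<Rightarrow> real \<Rightarrow> real" where
  "Dplus_inner lam f x = (1 + x) powr (-lam) *
     integral {-1..x} (\<lambda>\<tau>. (x - \<tau>) powr (-1/2) * (1 + \<tau>) powr (lam - 1/2) * f \<tau>)"

definition Dminus_inner :: "real \<Rightarrow> (real \<Rightarrow> real) \<Rightarrow> real \<Rightarrow> real" where
  "Dminus_inner lam f x = (1 - x) powr (-lam) *
     integral {x..1} (\<lambda>\<tau>. (\<tau> - x) powr (-1/2) * (1 - \<tau>) powr (lam - 1/2) * f \<tau>)"

definition Dplus :: "real \<Rightarrow> (real \<Rightarrow> real) \<Rightarrow> real \<Rightarrow> real" where
  "Dplus lam f x = (1 + x) * deriv (Dplus_inner lam f) x"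

definition Dminus :: "real \<Rightarrow> (real \<Rightarrow> real) \<Rightarrow> real \<Rightarrow> real" where
  "Dminus lam f x = (1 - x) * deriv (Dminus_inner lam f) x"

definition calD_plus :: "real \<Rightarrow> (real \<Rightarrow> real) \<Rightarrow> real \<Rightarrow> real" where
  "calD_plus lam f x = Dplus lam f x + Dminus lam f x"

definition calD_minus :: "real \<Rightarrow> (real \<Rightarrow> real) \<Rightarrow> real \<Rightarrow> real" where
  "calD_minus lam f x = Dplus lam f x - Dminus lam f x"

end

theory Submission
  imports Defs "HOL-Computational_Algebra.Polynomial"
begin

text \<open>For \<open>\<lambda> = 0\<close> the substitution \<open>\<tau> = -1 + (1 + x)(1 - cos \<phi>)/2\<close> turns the inner integral
  of \<open>D\<^sup>0\<^sub>+f\<close> into \<open>U(x) = \<integral>\<^sub>0\<^sup>\<pi> f(-1 + (1 + x)(1 - cos \<phi>)/2) d\<phi>\<close>, so that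
  \<open>D\<^sup>0\<^sub>+f = (1 + x) U'\<close>, and integration by parts against \<open>P\<^sub>n\<close> writes \<open>\<integral> D\<^sup>0\<^sub>+f P\<^sub>n\<close> as a
  bounded linear functional of \<open>f\<close>. The substitution \<open>t = -cos \<theta>\<close> writes the Chebyshev
  coefficients as cosine coefficients of \<open>f(-cos \<theta>)\<close>. On the monomials \<open>(1 + t)\<^sup>j\<close> both sides
  are explicit: \<open>U\<close> is \<open>(1 + x)\<^sup>j\<close> times a central binomial coefficient and the Legendre moments
  \<open>\<integral> (1 + x)\<^sup>j P\<^sub>n\<close> satisfy Bonnet's recurrence, whose solution is a ratio of binomial
  coefficients. Weierstrass approximation extends the identity to all continuous \<open>f\<close>, and the
  reflection \<open>t \<mapsto> -t\<close> reduces \<open>D\<^sup>0\<^sub>-\<close> to \<open>D\<^sup>0\<^sub>+\<close>.\<close>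

lemma has_integral_substitution_nonneg:
  fixes f g g' h :: "real \<Rightarrow> real" and a b c d :: real
  assumes ab: "a < b" and cd: "c < d"
    and contf: "\<And>t. t \<in> {c<..<d} \<Longrightarrow> isCont f t"
    and fnn: "\<And>t. t \<in> {c<..<d} \<Longrightarrow> 0 \<le> f t"
    and derg: "\<And>x. x \<in> {a<..<b} \<Longrightarrow> (g has_real_derivative g' x) (at x)"
    and contg': "\<And>x. x \<in> {a<..<b} \<Longrightarrow> isCont g' x"
    and grange: "\<And>x. x \<in> {a<..<b} \<Longrightarrow> g x \<in> {c<..<d}"
    and g'nn: "\<And>x. x \<in> {a..b} \<Longrightarrow> 0 \<le> g' x"
    and contg: "continuous_on {a..b} g" and ga: "g a = c" and gb: "g b = d"
    and h: "continuous_on {a..b} h"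
    and fg: "\<And>x. x \<in> {a<..<b} \<Longrightarrow> f (g x) * g' x = h x"
  shows "(f has_integral integral {a..b} h) {c..d}"
proof -
  have lim_a: "((ereal \<circ> g \<circ> real_of_ereal) \<longlongrightarrow> ereal c) (at_right (ereal a))"
  proof -
    have "(g \<longlongrightarrow> g a) (at_right a)"
      using contg ab by (metis atLeastAtMost_iff continuous_on_Icc_at_rightD less_eq_real_def order_refl)
    then show ?thesis using ga by (simp add: ereal_tendsto_simps)
  qed
  have lim_b: "((ereal \<circ> g \<circ> real_of_ereal) \<longlongrightarrow> ereal d) (at_left (ereal b))"
  proof -
    have "(g \<longlongrightarrow> g b) (at_left b)"
      using contg ab by (metis atLeastAtMost_iff continuous_on_Icc_at_leftD less_eq_real_def order_refl)
    then show ?thesis using gb by (simp add: ereal_tendsto_simps)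
  qed
  have int_h: "set_integrable lborel {a..b} h"
    by (rule borel_integrable_atLeastAtMost'[OF h])
  have int_fg: "set_integrable lborel (einterval (ereal a) (ereal b)) (\<lambda>x. f (g x) * g' x)"
  proof -
    have "set_integrable lborel (einterval (ereal a) (ereal b)) h"
      by (rule set_integrable_subset[OF int_h]) (auto simp: einterval_def)
    then show ?thesis
      by (rule set_integrable_cong[THEN iffD1, rotated -1]) (auto simp: einterval_def fg)
  qed
  have int_f: "set_integrable lborel {c<..<d} f"
    and subst: "(LBINT x=ereal c..ereal d. f x) = (LBINT x=ereal a..ereal b. f (g x) * g' x)"
    using interval_integral_substitution_nonneg[of "ereal a" "ereal b" g g' f "ereal c" "ereal d",
        OF _ _ _ _ _ _ lim_a lim_b int_fg] ab derg contf contg' fnn grange g'nn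
    by auto
  have "(LBINT x=ereal a..ereal b. f (g x) * g' x) = (LBINT x=ereal a..ereal b. h x)"
    using ab by (simp add: interval_lebesgue_integral_le_eq) (rule set_lebesgue_integral_cong, auto simp: fg)
  also have "\<dots> = integral {a..b} h"
    using ab int_h by (simp add: interval_integral_eq_integral)
  finally have "(LBINT x=ereal c..ereal d. f x) = integral {a..b} h" using subst by simp
  moreover have "(LBINT x=ereal c..ereal d. f x) = integral {c<..<d} f"
    using cd int_f by (simp add: interval_lebesgue_integral_le_eq set_borel_integral_eq_integral)
  moreover have "(f has_integral integral {c<..<d} f) {c<..<d}"
    using set_borel_integral_eq_integral(1)[OF int_f] by (simp add: has_integral_integral)
  ultimately show ?thesis by (simp add: has_integral_Icc_iff_Ioo)
qed

text \<open>Since \<open>F\<close> is bounded by some \<open>M\<close>, the nonnegative case applies to \<open>F + M\<close> and to \<open>M\<close>.\<close>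
lemma has_integral_substitution_weighted:
  fixes F k g g' :: "real \<Rightarrow> real" and a b c d :: real
  assumes ab: "a < b" and cd: "c < d"
    and contF: "continuous_on {c..d} F"
    and contk: "\<And>t. t \<in> {c<..<d} \<Longrightarrow> isCont k t"
    and knn: "\<And>t. t \<in> {c<..<d} \<Longrightarrow> 0 \<le> k t"
    and derg: "\<And>x. x \<in> {a<..<b} \<Longrightarrow> (g has_real_derivative g' x) (at x)"
    and contg': "\<And>x. x \<in> {a<..<b} \<Longrightarrow> isCont g' x"
    and grange: "\<And>x. x \<in> {a<..<b} \<Longrightarrow> g x \<in> {c<..<d}"
    and g'nn: "\<And>x. x \<in> {a..b} \<Longrightarrow> 0 \<le> g' x"
    and contg: "continuous_on {a..b} g" and ga: "g a = c" and gb: "g b = d"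
    and kg: "\<And>x. x \<in> {a<..<b} \<Longrightarrow> k (g x) * g' x = 1"
  shows "((\<lambda>t. F t * k t) has_integral integral {a..b} (\<lambda>x. F (g x))) {c..d}"
proof -
  obtain M where M: "\<And>t. t \<in> {c..d} \<Longrightarrow> \<bar>F t\<bar> \<le> M"
    using compact_imp_bounded[OF compact_continuous_image[OF contF compact_Icc]]
    unfolding bounded_iff by (metis image_eqI real_norm_def)
  have M_nonneg: "0 \<le> M" using M[of c] cd by auto
  have g_mem: "g x \<in> {c..d}" if "x \<in> {a..b}" for x
    using grange[of x] that ga gb cd by (cases "x = a \<or> x = b") auto
  have contFg: "continuous_on {a..b} (\<lambda>x. F (g x))"
    by (rule continuous_on_compose2[OF contF contg]) (use g_mem in auto)
  have isContF: "isCont F t" if "t \<in> {c<..<d}" for t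
    using contF that
    by (metis at_within_Icc_at continuous_on_eq_continuous_within greaterThanLessThan_iff
        less_eq_real_def atLeastAtMost_iff)
  have shifted: "((\<lambda>t. (F t + M) * k t) has_integral integral {a..b} (\<lambda>x. F (g x) + M)) {c..d}"
  proof (rule has_integral_substitution_nonneg[OF ab cd _ _ derg contg' grange g'nn contg ga gb])
    show "0 \<le> (F t + M) * k t" if "t \<in> {c<..<d}" for t
      using M[of t] knn[of t] that by simp
    show "(F (g x) + M) * k (g x) * g' x = F (g x) + M" if "x \<in> {a<..<b}" for x
      using kg[OF that] by (metis mult.assoc mult.right_neutral)
  qed (auto intro!: continuous_intros contFg isContF contk)
  have const: "((\<lambda>t. M * k t) has_integral integral {a..b} (\<lambda>x. M)) {c..d}"
  proof (rule has_integral_substitution_nonneg[OF ab cd _ _ derg contg' grange g'nn contg ga gb])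
    show "M * k (g x) * g' x = M" if "x \<in> {a<..<b}" for x
      using kg[OF that] by (metis mult.assoc mult.right_neutral)
  qed (use knn M_nonneg in \<open>auto intro!: continuous_intros contk\<close>)
  have "integral {a..b} (\<lambda>x. F (g x) + M) - integral {a..b} (\<lambda>x. M) = integral {a..b} (\<lambda>x. F (g x))"
    by (subst integral_add) (auto intro!: integrable_continuous_real contFg)
  with has_integral_diff[OF shifted const] show ?thesis by (simp add: algebra_simps)
qed

lemma power2_powr_neg_half:
  assumes "(y::real) > 0" shows "(y\<^sup>2) powr (-1/2) = 1 / y"
proof -
  have "(y\<^sup>2) powr (-1/2) = (y powr 2) powr (-1/2)" using assms by (simp add: powr_realpow)
  also have "\<dots> = y powr (-1)" by (simp add: powr_powr)
  finally show ?thesis using assms by (simp add: powr_minus_divide)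
qed

definition arcsine_integral :: "(real \<Rightarrow> real) \<Rightarrow> real \<Rightarrow> real" where
  "arcsine_integral f x = integral {0..pi} (\<lambda>\<phi>. f (-1 + (1 + x) * (1 - cos \<phi>) / 2))"

lemma arcsine_arg_mem:
  assumes "x \<in> {-1..1}" shows "-1 + (1 + x) * (1 - cos \<phi>) / 2 \<in> {-1..(1::real)}"
proof -
  have "0 \<le> 1 + x" "1 + x \<le> 2" "0 \<le> 1 - cos \<phi>" "1 - cos \<phi> \<le> 2" using assms by auto
  then have "0 \<le> (1 + x) * (1 - cos \<phi>)" "(1 + x) * (1 - cos \<phi>) \<le> 2 * 2"
    using mult_mono[of "1 + x" 2 "1 - cos \<phi>" 2] by auto
  then show ?thesis by auto
qed

text \<open>With \<open>\<lambda> = 0\<close> the substitution \<open>\<tau> = -1 + (1 + x)(1 - cos \<phi>)/2\<close> turns the kernel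
  \<open>((x - \<tau>)(1 + \<tau>))\<^sup>-\<^sup>1\<^sup>/\<^sup>2 d\<tau>\<close> into \<open>d\<phi>\<close>.\<close>
lemma Dplus_inner_0_eq_arcsine_integral:
  fixes f :: "real \<Rightarrow> real"
  assumes contf: "continuous_on {-1..1} f" and x: "x \<in> {-1<..<1}"
  shows "Dplus_inner 0 f x = arcsine_integral f x"
proof -
  define k where "k = (\<lambda>\<tau>::real. (x - \<tau>) powr (-1/2) * (1 + \<tau>) powr (-1/2))"
  define g where "g = (\<lambda>\<phi>. -1 + (1 + x) * (1 - cos \<phi>) / 2)"
  have x1: "1 + x > 0" "x < 1" using x by auto
  have "((\<lambda>t. f t * k t) has_integral integral {0..pi} (\<lambda>\<phi>. f (g \<phi>))) {-1..x}"
  proof (rule has_integral_substitution_weighted[where g' = "\<lambda>\<phi>. (1 + x) * sin \<phi> / 2"])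
    show "continuous_on {-1..x} f" by (rule continuous_on_subset[OF contf]) (use x in auto)
    show "isCont k t" "0 \<le> k t" if "t \<in> {-1<..<x}" for t
      unfolding k_def using that by (auto intro!: continuous_intros)
  next
    fix \<phi> assume \<phi>: "\<phi> \<in> {0<..<pi}"
    show "(g has_real_derivative (1 + x) * sin \<phi> / 2) (at \<phi>)" unfolding g_def
      by (auto intro!: derivative_eq_intros)
    have cos: "cos \<phi> < 1" "-1 < cos \<phi>"
      using cos_monotone_0_pi[of 0 \<phi>] cos_monotone_0_pi[of \<phi> pi] \<phi> by auto
    have "(1 + x) * (1 - cos \<phi>) > 0" "(1 + x) * (1 + cos \<phi>) > 0" using cos x1 by auto
    then show "g \<phi> \<in> {-1<..<x}" unfolding g_def by (auto simp: algebra_simps)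
    have sin: "sin \<phi> > 0" using \<phi> by (auto intro: sin_gt_zero)
    have "x - g \<phi> > 0" "1 + g \<phi> > 0" using \<open>g \<phi> \<in> {-1<..<x}\<close> by auto
    then have "k (g \<phi>) = ((x - g \<phi>) * (1 + g \<phi>)) powr (-1/2)"
      unfolding k_def by (simp add: powr_mult)
    also have "(x - g \<phi>) * (1 + g \<phi>) = ((1 + x) * sin \<phi> / 2)\<^sup>2"
      unfolding g_def by (simp add: power_mult_distrib power_divide sin_squared_eq)
        (simp add: field_simps power2_eq_square)
    also have "(((1 + x) * sin \<phi> / 2)\<^sup>2) powr (-1/2) = 1 / ((1 + x) * sin \<phi> / 2)"
      using sin x1 by (intro power2_powr_neg_half) simp
    finally have "k (g \<phi>) = 1 / ((1 + x) * sin \<phi> / 2)" .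
    then show "k (g \<phi>) * ((1 + x) * sin \<phi> / 2) = 1" using sin x1 by simp
  next
    show "0 \<le> (1 + x) * sin \<phi> / 2" if "\<phi> \<in> {0..pi}" for \<phi>
      using sin_ge_zero[of \<phi>] that x1 by simp
  next
    show "continuous_on {0..pi} g" unfolding g_def by (intro continuous_intros) simp
  qed (use x1 in \<open>simp_all add: g_def field_simps\<close>)
  moreover have "Dplus_inner 0 f x = integral {-1..x} (\<lambda>t. f t * k t)"
    unfolding Dplus_inner_def k_def using x1 by (auto intro!: integral_cong)
  ultimately show ?thesis by (simp add: integral_unique arcsine_integral_def g_def)
qed

lemma continuous_on_arcsine_integral:
  assumes contf: "continuous_on {-1..1} f"
  shows "continuous_on {-1..1} (arcsine_integral f)"
proof -
  have "continuous_on ({-1..1} \<times> cbox 0 pi) (\<lambda>(x, \<phi>). f (-1 + (1 + x) * (1 - cos \<phi>) / 2))"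
    unfolding case_prod_beta
    by (rule continuous_on_compose2[OF contf])
      (use arcsine_arg_mem in \<open>auto intro!: continuous_intros\<close>)
  from integral_continuous_on_param[OF this] show ?thesis
    unfolding arcsine_integral_def[abs_def] by simp
qed

lemma chebT_minus_cos: "chebT m (- cos \<theta>) = (-1)^m * cos (real m * \<theta>)"
proof (induction m "- cos \<theta>" rule: chebT.induct)
  case (3 n)
  have "cos (real (Suc (Suc n)) * \<theta>) = 2 * cos \<theta> * cos (real (Suc n) * \<theta>) - cos (real n * \<theta>)"
    using cos_add[of "real (Suc n) * \<theta>" \<theta>] cos_diff[of "real (Suc n) * \<theta>" \<theta>]
    by (simp add: algebra_simps)
  then have "(-1)^n * cos (real (Suc (Suc n)) * \<theta>) =
      (-1)^n * (2 * cos \<theta> * cos (real (Suc n) * \<theta>) - cos (real n * \<theta>))"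
    by simp
  with 3 show ?case by (simp add: algebra_simps)
qed auto

lemma chebT_minus: "chebT m (-t) = (-1)^m * chebT m t"
  by (induction m t rule: chebT.induct) (simp_all add: algebra_simps)

lemma continuous_on_chebT [continuous_intros]: "continuous_on S (\<lambda>x. chebT n x)"
proof -
  have "continuous_on S (\<lambda>x. chebT n x) \<and> continuous_on S (\<lambda>x. chebT (Suc n) x)"
    by (induction n) (auto intro!: continuous_intros)
  then show ?thesis by blast
qed

lemma has_integral_chebyshev_weight:
  fixes F :: "real \<Rightarrow> real"
  assumes contF: "continuous_on {-1..1} F"
  shows "((\<lambda>t. F t * (1 - t\<^sup>2) powr (-1/2)) has_integral integral {0..pi} (\<lambda>\<theta>. F (- cos \<theta>))) {-1..1}"
proof (rule has_integral_substitution_weighted[where g = "\<lambda>\<theta>. - cos \<theta>" and g' = sin, OF pi_gt_zero _ contF])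
  fix t :: real assume "t \<in> {-1<..<1}"
  then have "1 - t\<^sup>2 > 0" by (simp add: abs_square_less_1 abs_less_iff)
  then show "isCont (\<lambda>t. (1 - t\<^sup>2) powr (-1/2)) t" by (intro continuous_intros) auto
  show "0 \<le> (1 - t\<^sup>2) powr (-1/2)" by simp
next
  fix \<phi> assume \<phi>: "\<phi> \<in> {0<..<pi}"
  show "((\<lambda>\<theta>. - cos \<theta>) has_real_derivative sin \<phi>) (at \<phi>)" by (auto intro!: derivative_eq_intros)
  show "- cos \<phi> \<in> {-1<..<1}"
    using cos_monotone_0_pi[of 0 \<phi>] cos_monotone_0_pi[of \<phi> pi] \<phi> by auto
  have "sin \<phi> > 0" using \<phi> by (auto intro: sin_gt_zero)
  moreover have "1 - (- cos \<phi>)\<^sup>2 = (sin \<phi>)\<^sup>2" by (simp add: sin_squared_eq)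
  ultimately show "(1 - (- cos \<phi>)\<^sup>2) powr (-1/2) * sin \<phi> = 1"
    using power2_powr_neg_half[of "sin \<phi>"] by simp
next
  show "0 \<le> sin \<phi>" if "\<phi> \<in> {0..pi}" for \<phi> using that by (auto intro!: sin_ge_zero)
qed (auto intro!: continuous_intros)

definition cos_coeff :: "(real \<Rightarrow> real) \<Rightarrow> nat \<Rightarrow> real" where
  "cos_coeff f m = integral {0..pi} (\<lambda>\<theta>. f (- cos \<theta>) * cos (real m * \<theta>))"

lemma cheb_coeff_eq_cos_coeff:
  assumes "continuous_on {-1..1} f"
  shows "cheb_coeff f m = (if m = 0 then 1 / pi else 2 / pi) * (-1)^m * cos_coeff f m"
proof -
  have "((\<lambda>t. (f t * chebT m t) * (1 - t\<^sup>2) powr (-1/2)) has_integral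
      integral {0..pi} (\<lambda>\<theta>. f (- cos \<theta>) * chebT m (- cos \<theta>))) {-1..1}"
    by (rule has_integral_chebyshev_weight) (intro continuous_intros assms)
  moreover have "integral {0..pi} (\<lambda>\<theta>. f (- cos \<theta>) * chebT m (- cos \<theta>)) = (-1)^m * cos_coeff f m"
    unfolding cos_coeff_def chebT_minus_cos by (simp add: mult.left_commute)
  ultimately show ?thesis unfolding cheb_coeff_def by (simp add: integral_unique)
qed

lemma cheb_coeff_reflect: "cheb_coeff (\<lambda>t. f (-t)) m = (-1)^m * cheb_coeff f m"
proof -
  define g where "g = (\<lambda>s. (-1)^m * (f s * chebT m s * (1 - s\<^sup>2) powr (-1/2)))"
  have "(\<lambda>t. g (-t)) = (\<lambda>t. f (-t) * chebT m t * (1 - t\<^sup>2) powr (-1/2))"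
  proof
    fix t
    have "(-1::real)^m * (-1)^m = 1" by (simp flip: power_add)
    then show "g (-t) = f (-t) * chebT m t * (1 - t\<^sup>2) powr (-1/2)"
      unfolding g_def chebT_minus by (simp add: algebra_simps)
  qed
  moreover have "integral {- 1 .. - (-1)} (\<lambda>t. g (-t)) = integral {-1..1} g"
    by (rule Henstock_Kurzweil_Integration.integral_reflect_real)
  moreover have "integral {-1..1} g = (-1)^m * integral {-1..1} (\<lambda>s. f s * chebT m s * (1 - s\<^sup>2) powr (-1/2))"
    unfolding g_def by (rule Henstock_Kurzweil_Integration.integral_mult_right)
  ultimately show ?thesis unfolding cheb_coeff_def by simp
qed

lemma cos_coeff_reflect:
  assumes f: "continuous_on {-1..1} f"
  shows "cos_coeff (\<lambda>t. f (-t)) m = (-1)^m * cos_coeff f m"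
proof -
  have "continuous_on {-1..1} (\<lambda>t. f (-t))"
    by (rule continuous_on_compose2[OF f]) (auto intro!: continuous_intros)
  then have "(-1)^m * cos_coeff (\<lambda>t. f (-t)) m = cos_coeff f m"
    using cheb_coeff_reflect[of f m] cheb_coeff_eq_cos_coeff[OF f, of m]
      cheb_coeff_eq_cos_coeff[of "\<lambda>t. f (-t)" m]
    by (cases "m = 0") auto
  moreover have "(-1::real)^m * (-1)^m = 1" by (simp flip: power_add)
  ultimately show ?thesis by (metis mult.assoc mult_1)
qed

fun legendre_poly :: "nat \<Rightarrow> real poly" where
  "legendre_poly 0 = 1"
| "legendre_poly (Suc 0) = [:0, 1:]"
| "legendre_poly (Suc (Suc n)) = smult (1 / (real n + 2))
     (smult (2 * real n + 3) ([:0, 1:] * legendre_poly (Suc n)) - smult (real n + 1) (legendre_poly n))"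

lemma legP_eq_poly: "legP n x = poly (legendre_poly n) x"
  by (induction n x rule: legP.induct) (simp_all add: field_simps)

lemma legP_one: "legP n 1 = 1"
  by (induction n "1::real" rule: legP.induct) (simp_all add: field_simps)

lemma legP_minus: "legP n (-x) = (-1)^n * legP n x"
  by (induction n x rule: legP.induct) (simp_all add: field_simps)

definition dlegP :: "nat \<Rightarrow> real \<Rightarrow> real" where
  "dlegP n x = poly (pderiv (legendre_poly n)) x"

lemma has_real_derivative_legP: "(legP n has_real_derivative dlegP n x) (at x within S)"
  unfolding dlegP_def legP_eq_poly[abs_def] by (rule has_field_derivative_at_within[OF poly_DERIV])

lemma has_real_derivative_legP_comp [derivative_intros]:
  "(g has_real_derivative g') (at x within S) \<Longrightarrow>
   ((\<lambda>y. legP n (g y)) has_real_derivative dlegP n (g x) * g') (at x within S)"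
  by (rule DERIV_chain'[OF _ has_real_derivative_legP])

lemma continuous_on_legP [continuous_intros]: "continuous_on S (\<lambda>x. legP n x)"
  unfolding legP_eq_poly by (intro continuous_intros)

lemma continuous_on_dlegP [continuous_intros]: "continuous_on S (\<lambda>x. dlegP n x)"
  unfolding dlegP_def by (intro continuous_intros)

text \<open>\<open>legP n x + (1 + x) * dlegP n x\<close> is the derivative of \<open>(1 + x) P\<^sub>n(x)\<close>; the functional is
  what integration by parts makes of \<open>\<integral> D\<^sup>0\<^sub>+f P\<^sub>n\<close>.\<close>
definition leg_functional :: "nat \<Rightarrow> (real \<Rightarrow> real) \<Rightarrow> real" where
  "leg_functional n f = 2 * arcsine_integral f 1 -
     integral {-1..1} (\<lambda>x. arcsine_integral f x * (legP n x + (1 + x) * dlegP n x))"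

lemma has_integral_Dplus_legP:
  fixes f :: "real \<Rightarrow> real"
  assumes contf: "continuous_on {-1..1} f"
    and diff: "\<forall>x\<in>{-1<..<1}. Dplus_inner 0 f differentiable (at x)"
  shows "((\<lambda>x. Dplus 0 f x * legP n x) has_integral leg_functional n f) {-1..1}"
proof -
  define U where "U = arcsine_integral f"
  define R where "R x = legP n x + (1 + x) * dlegP n x" for x
  define G where "G x = (1 + x) * U x * legP n x" for x
  have contU: "continuous_on {-1..1} U"
    unfolding U_def by (rule continuous_on_arcsine_integral[OF contf])
  have ftc: "((\<lambda>x. Dplus 0 f x * legP n x + U x * R x) has_integral (G 1 - G (-1))) {-1..1}"
  proof (rule fundamental_theorem_of_calculus_interior)
    show "continuous_on {-1..1} G" unfolding G_def by (intro continuous_intros contU)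
  next
    fix x :: real assume x: "x \<in> {-1<..<1}"
    have "(Dplus_inner 0 f has_real_derivative deriv (Dplus_inner 0 f) x) (at x)"
      using diff x by (simp add: DERIV_deriv_iff_real_differentiable)
    then have "(U has_real_derivative deriv (Dplus_inner 0 f) x) (at x)"
      by (rule has_field_derivative_transform_within_open[where S="{-1<..<1}"])
         (use x contf in \<open>auto simp: U_def Dplus_inner_0_eq_arcsine_integral\<close>)
    then have "(G has_real_derivative
        U x * legP n x + (1 + x) * deriv (Dplus_inner 0 f) x * legP n x + (1 + x) * U x * dlegP n x) (at x)"
      unfolding G_def[abs_def] by (auto intro!: derivative_eq_intros simp: algebra_simps)
    then show "(G has_vector_derivative Dplus 0 f x * legP n x + U x * R x) (at x)"
      unfolding has_real_derivative_iff_has_vector_derivative[symmetric] Dplus_def R_def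
      by (simp add: algebra_simps)
  qed simp
  have "((\<lambda>x. U x * R x) has_integral integral {-1..1} (\<lambda>x. U x * R x)) {-1..1}"
    unfolding R_def by (intro integrable_integral integrable_continuous_interval continuous_intros contU)
  from has_integral_diff[OF ftc this]
  have "((\<lambda>x. Dplus 0 f x * legP n x) has_integral G 1 - G (-1) - integral {-1..1} (\<lambda>x. U x * R x)) {-1..1}"
    by simp
  moreover have "G 1 - G (-1) = 2 * U 1" by (simp add: G_def legP_one)
  ultimately show ?thesis by (simp add: leg_functional_def U_def R_def)
qed

lemma Dminus_inner_eq_reflect: "Dminus_inner lam f x = Dplus_inner lam (\<lambda>t. f (-t)) (-x)"
proof -
  define g where "g \<tau> = (\<tau> - x) powr (-1/2) * (1 - \<tau>) powr (lam - 1/2) * f \<tau>" for \<tau>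
  have "integral {- 1 .. - x} (\<lambda>\<tau>. g (-\<tau>)) = integral {x..1} g"
    by (rule Henstock_Kurzweil_Integration.integral_reflect_real)
  moreover have "(\<lambda>\<tau>. g (-\<tau>)) = (\<lambda>\<tau>. (- x - \<tau>) powr (-1/2) * (1 + \<tau>) powr (lam - 1/2) * f (-\<tau>))"
  proof
    fix \<tau> :: real
    have "- \<tau> - x = - x - \<tau>" "1 - - \<tau> = 1 + \<tau>" by simp_all
    then show "g (-\<tau>) = (- x - \<tau>) powr (-1/2) * (1 + \<tau>) powr (lam - 1/2) * f (-\<tau>)"
      unfolding g_def by (simp only:)
  qed
  ultimately show ?thesis unfolding Dminus_inner_def Dplus_inner_def g_def by simp
qed

lemma has_real_derivative_Dplus_inner_reflect:
  assumes "(Dminus_inner lam f has_real_derivative D) (at x)"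
  shows "(Dplus_inner lam (\<lambda>t. f (-t)) has_real_derivative - D) (at (-x))"
proof -
  have "Dplus_inner lam (\<lambda>t. f (-t)) = (\<lambda>y. Dminus_inner lam f (-y))"
    by (simp add: Dminus_inner_eq_reflect)
  then show ?thesis
    using DERIV_chain'[OF DERIV_minus[OF DERIV_ident], of "Dminus_inner lam f" D "-x"] assms
    by simp
qed

lemma differentiable_Dplus_inner_reflect:
  assumes "Dminus_inner lam f differentiable (at (-y))"
  shows "Dplus_inner lam (\<lambda>t. f (-t)) differentiable (at y)"
  using has_real_derivative_Dplus_inner_reflect[of lam f _ "-y"] assms
  by (auto simp: real_differentiable_def)

lemma Dminus_eq_reflect:
  assumes "Dminus_inner lam f differentiable (at x)"
  shows "Dminus lam f x = - Dplus lam (\<lambda>t. f (-t)) (-x)"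
proof -
  have "(Dminus_inner lam f has_real_derivative deriv (Dminus_inner lam f) x) (at x)"
    using assms by (simp add: DERIV_deriv_iff_real_differentiable)
  then have "deriv (Dplus_inner lam (\<lambda>t. f (-t))) (-x) = - deriv (Dminus_inner lam f) x"
    by (intro DERIV_imp_deriv has_real_derivative_Dplus_inner_reflect)
  then show ?thesis by (simp add: Dminus_def Dplus_def)
qed

lemma has_integral_Dminus_legP:
  fixes f :: "real \<Rightarrow> real"
  assumes contf: "continuous_on {-1..1} f"
    and diff: "\<forall>x\<in>{-1<..<1}. Dminus_inner 0 f differentiable (at x)"
  shows "((\<lambda>x. Dminus 0 f x * legP n x) has_integral
      - ((-1)^n * leg_functional n (\<lambda>t. f (-t)))) {-1..1}"
proof -
  define g where "g y = - ((-1)^n * (Dplus 0 (\<lambda>t. f (-t)) y * legP n y))" for y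
  have "continuous_on {-1..1} (\<lambda>t. f (-t))"
    by (rule continuous_on_compose2[OF contf]) (auto intro!: continuous_intros)
  moreover have "\<forall>y\<in>{-1<..<1}. Dplus_inner 0 (\<lambda>t. f (-t)) differentiable (at y)"
    using diff by (auto intro!: differentiable_Dplus_inner_reflect)
  ultimately have "(g has_integral - ((-1)^n * leg_functional n (\<lambda>t. f (-t)))) {-1..1}"
    unfolding g_def by (intro has_integral_neg has_integral_mult_right has_integral_Dplus_legP)
  then have "((\<lambda>x. g (-x)) has_integral - ((-1)^n * leg_functional n (\<lambda>t. f (-t)))) {- 1 .. - (-1)}"
    by (simp only: has_integral_reflect_real)
  then have "((\<lambda>x. g (-x)) has_integral - ((-1)^n * leg_functional n (\<lambda>t. f (-t)))) {-1<..<1}"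
    by (simp only: has_integral_Icc_iff_Ioo minus_minus)
  moreover have "g (-x) = Dminus 0 f x * legP n x" if "x \<in> {-1<..<1}" for x
  proof -
    have "(-1::real)^n * (-1)^n = 1" by (simp flip: power_add)
    then show ?thesis
      using that diff by (simp add: g_def Dminus_eq_reflect legP_minus)
  qed
  ultimately have "((\<lambda>x. Dminus 0 f x * legP n x) has_integral
      - ((-1)^n * leg_functional n (\<lambda>t. f (-t)))) {-1<..<1}"
    using has_integral_cong[of "{-1<..<1}" "\<lambda>x. g (-x)" "\<lambda>x. Dminus 0 f x * legP n x"] by blast
  then show ?thesis by (simp only: has_integral_Icc_iff_Ioo)
qed

lemma integral_cos_nat_mult:
  "integral {0..pi} (\<lambda>\<theta>. cos (real m * \<theta>)) = (if m = 0 then pi else 0)"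
proof (cases "m = 0")
  case False
  have "((\<lambda>\<theta>. cos (real m * \<theta>)) has_integral (sin (real m * pi) / m - sin (real m * 0) / m)) {0..pi}"
    by (rule fundamental_theorem_of_calculus)
      (use False in \<open>auto intro!: derivative_eq_intros
          simp: has_real_derivative_iff_has_vector_derivative[symmetric]\<close>)
  then show ?thesis using False by (simp add: integral_unique sin_npi2 mult.commute)
qed simp

definition cos_moment :: "nat \<Rightarrow> nat \<Rightarrow> real" where
  "cos_moment j m = integral {0..pi} (\<lambda>\<theta>. (1 - cos \<theta>)^j * cos (real m * \<theta>))"

lemma cos_moment_Suc:
  "cos_moment (Suc j) m =
     cos_moment j m - integral {0..pi} (\<lambda>\<theta>. (1 - cos \<theta>)^j * (cos \<theta> * cos (real m * \<theta>)))"
proof -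
  have "cos_moment (Suc j) m = integral {0..pi} (\<lambda>\<theta>. (1 - cos \<theta>)^j * cos (real m * \<theta>) -
      (1 - cos \<theta>)^j * (cos \<theta> * cos (real m * \<theta>)))"
    unfolding cos_moment_def by (rule integral_cong) (simp add: algebra_simps)
  also have "\<dots> = cos_moment j m - integral {0..pi} (\<lambda>\<theta>. (1 - cos \<theta>)^j * (cos \<theta> * cos (real m * \<theta>)))"
    unfolding cos_moment_def
    by (rule integral_diff) (auto intro!: integrable_continuous_interval continuous_intros)
  finally show ?thesis .
qed

lemma cos_moment_Suc_0: "cos_moment (Suc j) 0 = cos_moment j 0 - cos_moment j 1"
  unfolding cos_moment_Suc by (simp add: cos_moment_def)

lemma cos_moment_Suc_Suc:
  "cos_moment (Suc j) (Suc m) = cos_moment j (Suc m) - (cos_moment j (Suc (Suc m)) + cos_moment j m) / 2"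
proof -
  have prod: "cos \<theta> * cos (real (Suc m) * \<theta>) = (cos (real (Suc (Suc m)) * \<theta>) + cos (real m * \<theta>)) / 2" for \<theta>
    using cos_add[of "real (Suc m) * \<theta>" \<theta>] cos_diff[of "real (Suc m) * \<theta>" \<theta>]
    by (simp add: algebra_simps)
  have "integral {0..pi} (\<lambda>\<theta>. (1 - cos \<theta>)^j * (cos \<theta> * cos (real (Suc m) * \<theta>)))
      = integral {0..pi} (\<lambda>\<theta>. ((1 - cos \<theta>)^j * cos (real (Suc (Suc m)) * \<theta>) +
          (1 - cos \<theta>)^j * cos (real m * \<theta>)) / 2)"
    by (rule integral_cong) (simp only: prod, simp add: algebra_simps)
  also have "\<dots> = (cos_moment j (Suc (Suc m)) + cos_moment j m) / 2"
    unfolding cos_moment_def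
    by (simp only: Henstock_Kurzweil_Integration.integral_divide, subst integral_add)
      (auto intro!: integrable_continuous_interval continuous_intros)
  finally show ?thesis unfolding cos_moment_Suc by simp
qed

lemma binomial_Suc_Suc_twice:
  "Suc (Suc n) choose Suc (Suc k) = (n choose k) + 2 * (n choose Suc k) + (n choose Suc (Suc k))"
  by simp

lemma central_binomial_Suc:
  "Suc (Suc (2 * j)) choose Suc j = 2 * ((2 * j) choose j) + 2 * ((2 * j) choose Suc j)"
proof -
  have "Suc (2 * j) choose j = Suc (2 * j) choose Suc j"
    using binomial_symmetric[of j "Suc (2 * j)"] by simp
  then show ?thesis by simp
qed

lemma cos_moment_eq: "cos_moment j m = (-1)^m * pi * real ((2 * j) choose (j + m)) / 2^j"
proof (induction j arbitrary: m)
  case 0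
  then show ?case by (simp add: cos_moment_def integral_cos_nat_mult)
next
  case (Suc j)
  show ?case
  proof (cases m)
    case 0
    have "real (Suc (Suc (2 * j)) choose Suc j) = 2 * real ((2 * j) choose j) + 2 * real ((2 * j) choose Suc j)"
      by (simp only: central_binomial_Suc of_nat_add of_nat_mult of_nat_numeral)
    then show ?thesis
      unfolding 0 cos_moment_Suc_0 Suc.IH by (simp add: field_simps)
  next
    case (Suc m')
    have "real (Suc (Suc (2 * j)) choose Suc (Suc (j + m'))) = real ((2 * j) choose (j + m')) +
        2 * real ((2 * j) choose Suc (j + m')) + real ((2 * j) choose Suc (Suc (j + m')))"
      by (simp only: binomial_Suc_Suc_twice of_nat_add of_nat_mult of_nat_numeral)
    then show ?thesis
      unfolding Suc cos_moment_Suc_Suc \<open>\<And>m. cos_moment j m = _\<close> by (simp add: field_simps)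
  qed
qed

definition legendre_moment :: "nat \<Rightarrow> nat \<Rightarrow> real" where
  "legendre_moment j n = integral {-1..1} (\<lambda>x. (1 + x)^j * legP n x)"

lemma integral_one_plus_power: "integral {-1..1} (\<lambda>x::real. (1 + x)^j) = 2^(j+1) / (real j + 1)"
proof -
  have "((\<lambda>x::real. (1 + x)^(Suc j) / real (Suc j)) has_real_derivative (1 + x)^j) (at x)" for x
  proof -
    have "((\<lambda>x::real. (1 + x)^(Suc j)) has_real_derivative real (Suc j) * (1 + x)^j) (at x)"
      by (rule derivative_eq_intros refl | simp)+
    from DERIV_cdivide[OF this, of "real (Suc j)"] show ?thesis by (simp del: of_nat_Suc)
  qed
  then have "((\<lambda>x::real. (1 + x)^j) has_integral
      (1 + 1)^(Suc j) / real (Suc j) - (1 + -1)^(Suc j) / real (Suc j)) {-1..1}"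
    by (intro fundamental_theorem_of_calculus)
      (auto simp: has_real_derivative_iff_has_vector_derivative[symmetric] intro: DERIV_subset)
  then show ?thesis by (simp add: integral_unique)
qed

lemma legendre_moment_0: "legendre_moment j 0 = 2^(j+1) / (real j + 1)"
  by (simp add: legendre_moment_def integral_one_plus_power)

lemma legendre_moment_1: "legendre_moment j 1 = 2^(j+1) * real j / ((real j + 1) * (real j + 2))"
proof -
  have "legendre_moment j 1 = integral {-1..1} (\<lambda>x::real. (1 + x)^(j+1) - (1 + x)^j)"
    unfolding legendre_moment_def by (rule integral_cong) (simp add: algebra_simps)
  also have "\<dots> = 2^(j+2) / (real j + 2) - 2^(j+1) / (real j + 1)"
    by (subst integral_diff)
      (auto intro!: integrable_continuous_interval continuous_intros
        simp only: integral_one_plus_power[of "j+1"] integral_one_plus_power[of j], simp)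
  also have "\<dots> = 2^(j+1) * real j / ((real j + 1) * (real j + 2))"
    by (simp add: divide_simps) (simp add: algebra_simps)
  finally show ?thesis .
qed

text \<open>Bonnet's recurrence for \<open>P\<^sub>n\<^sub>+\<^sub>2\<close>, with \<open>x (1 + x)\<^sup>j = (1 + x)\<^sup>j\<^sup>+\<^sup>1 - (1 + x)\<^sup>j\<close>.\<close>
lemma legendre_moment_Suc_Suc:
  "legendre_moment j (n + 2) = ((2 * real n + 3) * (legendre_moment (j + 1) (n + 1) -
     legendre_moment j (n + 1)) - (real n + 1) * legendre_moment j n) / (real n + 2)"
proof -
  have mom: "((\<lambda>x. (1 + x)^i * legP k x) has_integral legendre_moment i k) {-1..1}" for i k
    unfolding legendre_moment_def
    by (intro integrable_integral integrable_continuous_interval continuous_intros)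
  have "((\<lambda>x. ((2 * real n + 3) * ((1 + x)^(j+1) * legP (n+1) x - (1 + x)^j * legP (n+1) x) -
       (real n + 1) * ((1 + x)^j * legP n x)) / (real n + 2)) has_integral
     ((2 * real n + 3) * (legendre_moment (j + 1) (n + 1) - legendre_moment j (n + 1)) -
       (real n + 1) * legendre_moment j n) / (real n + 2)) {-1..1}"
    by (intro has_integral_divide has_integral_diff has_integral_mult_right mom)
  also have "(\<lambda>x. ((2 * real n + 3) * ((1 + x)^(j+1) * legP (n+1) x - (1 + x)^j * legP (n+1) x) -
      (real n + 1) * ((1 + x)^j * legP n x)) / (real n + 2)) = (\<lambda>x. (1 + x)^j * legP (n + 2) x)"
  proof
    fix x :: real
    have "legP (n + 2) x = ((2 * real n + 3) * x * legP (n + 1) x - (real n + 1) * legP n x) / (real n + 2)"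
      by (simp add: numeral_2_eq_2)
    then show "((2 * real n + 3) * ((1 + x)^(j+1) * legP (n+1) x - (1 + x)^j * legP (n+1) x) -
      (real n + 1) * ((1 + x)^j * legP n x)) / (real n + 2) = (1 + x)^j * legP (n + 2) x"
      by (simp add: algebra_simps)
  qed
  finally show ?thesis unfolding legendre_moment_def[of j "n + 2"] by (rule integral_unique)
qed

text \<open>The closed form \<open>2\<^sup>j\<^sup>+\<^sup>1 (j!)\<^sup>2 / ((j - n)! (j + n + 1)!)\<close> of the moments, written as a
  product so that it vanishes for \<open>n > j\<close> without a case distinction.\<close>
fun legendre_moment_formula :: "nat \<Rightarrow> nat \<Rightarrow> real" where
  "legendre_moment_formula j 0 = 2^(j+1) / (real j + 1)"
| "legendre_moment_formula j (Suc n) =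
     legendre_moment_formula j n * (real j - real n) / (real j + real n + 2)"

lemma legendre_moment_formula_Suc_Suc:
  "legendre_moment_formula (Suc j) (Suc n) =
     legendre_moment_formula j n * (2 * (real j + 1)^2) / ((real j + real n + 2) * (real j + real n + 3))"
proof (induction n)
  case 0
  have "real j + 1 > 0" "real j + 2 > 0" "real j + 3 > 0" by simp_all
  then show ?case by (simp add: divide_simps) (simp add: algebra_simps power2_eq_square)
next
  case (Suc n)
  have "legendre_moment_formula (Suc j) (Suc (Suc n)) =
      legendre_moment_formula (Suc j) (Suc n) * (real j - real n) / (real j + real n + 4)"
    by (simp only: legendre_moment_formula.simps(2)) (simp add: algebra_simps)
  also have "\<dots> = legendre_moment_formula j n * (2 * (real j + 1)^2) /
      ((real j + real n + 2) * (real j + real n + 3)) * (real j - real n) / (real j + real n + 4)"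
    by (simp only: Suc.IH)
  also have "\<dots> = legendre_moment_formula j (Suc n) * (2 * (real j + 1)^2) /
      ((real j + real n + 3) * (real j + real n + 4))"
  proof -
    have "real j + real n + 2 > 0" "real j + real n + 3 > 0" "real j + real n + 4 > 0" by simp_all
    then show ?thesis by (simp add: divide_simps)
  qed
  finally show ?case by (simp add: algebra_simps)
qed

lemma legendre_moment_formula_rec:
  "legendre_moment_formula j (n + 2) = ((2 * real n + 3) * (legendre_moment_formula (j + 1) (n + 1) -
     legendre_moment_formula j (n + 1)) - (real n + 1) * legendre_moment_formula j n) / (real n + 2)"
proof -
  define X where "X = legendre_moment_formula j n"
  define D where "D = (real j + real n + 2) * (real j + real n + 3)"
  have D: "D > 0" unfolding D_def by simp
  have e2: "legendre_moment_formula j (n + 2) = X * ((real j - real n) * (real j - real n - 1)) / D"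
    by (simp add: X_def D_def algebra_simps)
  have e1: "legendre_moment_formula j (n + 1) = X * ((real j - real n) * (real j + real n + 3)) / D"
    using D by (simp add: X_def D_def)
  have e1': "legendre_moment_formula (j + 1) (n + 1) = X * (2 * (real j + 1)^2) / D"
    using legendre_moment_formula_Suc_Suc[of j n] by (simp add: X_def D_def)
  show ?thesis unfolding e1 e1' e2 X_def[symmetric] using D
    by (simp add: divide_simps) (simp add: D_def algebra_simps power2_eq_square)
qed

lemma legendre_moment_eq_formula: "legendre_moment j n = legendre_moment_formula j n"
proof -
  have "\<forall>j. legendre_moment j n = legendre_moment_formula j n \<and>
      legendre_moment j (n + 1) = legendre_moment_formula j (n + 1)"
  proof (induction n)
    case 0
    show ?case using legendre_moment_0 legendre_moment_1 by (simp add: field_simps)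
  next
    case (Suc n)
    then show ?case
      using legendre_moment_Suc_Suc[of _ n] legendre_moment_formula_rec[of _ n] by simp
  qed
  then show ?thesis by blast
qed

lemma Suc_times_binomial_Suc: "Suc k * (n choose Suc k) = (n - k) * (n choose k)"
proof (cases n)
  case (Suc m)
  then show ?thesis using Suc_times_binomial[of k m] binomial_absorb_comp[of n k] by simp
qed simp

lemma real_binomial_absorption:
  "(real j + real n + 1) * real ((2 * j) choose (j + Suc n)) =
     (real j - real n) * real ((2 * j) choose (j + n))"
proof -
  have "real (Suc (j + n) * ((2 * j) choose Suc (j + n))) =
      real ((2 * j - (j + n)) * ((2 * j) choose (j + n)))"
    by (simp only: Suc_times_binomial_Suc)
  moreover have "real ((2 * j - (j + n)) * ((2 * j) choose (j + n))) =
      (real j - real n) * real ((2 * j) choose (j + n))"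
    by (cases "n \<le> j") (simp_all add: of_nat_diff)
  ultimately show ?thesis by (simp add: algebra_simps)
qed

lemma legendre_moment_formula_binomial:
  "legendre_moment_formula j n * (real j + real n + 1) * real ((2 * j) choose j) =
     2^(j+1) * real ((2 * j) choose (j + n))"
proof (induction n)
  case (Suc n)
  have "(real j + real n + 1) *
      (legendre_moment_formula j (Suc n) * (real j + real (Suc n) + 1) * real ((2 * j) choose j)) =
      (real j - real n) *
      (legendre_moment_formula j n * (real j + real n + 1) * real ((2 * j) choose j))"
    by (simp add: divide_simps)
  also have "\<dots> = (real j + real n + 1) * (2^(j+1) * real ((2 * j) choose (j + Suc n)))"
    by (simp only: Suc.IH real_binomial_absorption
        mult.left_commute[of "real j + real n + 1"] mult.left_commute[of "real j - real n"])
  finally show ?case by (simp del: legendre_moment_formula.simps add: add_nonneg_eq_0_iff)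
qed (simp add: field_simps)

definition cheb_functional :: "nat \<Rightarrow> (real \<Rightarrow> real) \<Rightarrow> real" where
  "cheb_functional n f =
     2 / (2 * real n + 1) * (-1)^n * (real n * cos_coeff f n - (real n + 1) * cos_coeff f (n + 1))"

lemma arcsine_integral_power: "arcsine_integral (\<lambda>t. (1 + t)^j) x = (1 + x)^j * (cos_moment j 0 / 2^j)"
proof -
  have "arcsine_integral (\<lambda>t. (1 + t)^j) x =
      integral {0..pi} (\<lambda>\<phi>. ((1 + x)^j / 2^j) * ((1 - cos \<phi>)^j * cos (real 0 * \<phi>)))"
    unfolding arcsine_integral_def by (rule integral_cong) (simp add: power_mult_distrib power_divide)
  then show ?thesis by (simp add: cos_moment_def)
qed

lemma integral_power_legP_deriv:
  "integral {-1..1} (\<lambda>x. (1 + x)^j * (legP n x + (1 + x) * dlegP n x)) = 2^(j+1) - real j * legendre_moment j n"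
proof -
  have "((\<lambda>x. (1 + x)^(Suc j) * legP n x) has_real_derivative
      (1 + x)^j * (legP n x + (1 + x) * dlegP n x) + real j * ((1 + x)^j * legP n x)) (at x)" for x
  proof -
    have "((\<lambda>x::real. (1 + x)^(Suc j)) has_real_derivative real (Suc j) * (1 + x)^j) (at x)"
      by (rule derivative_eq_intros refl | simp)+
    from DERIV_mult[OF this has_real_derivative_legP] show ?thesis by (simp add: algebra_simps)
  qed
  then have ftc: "((\<lambda>x. (1 + x)^j * (legP n x + (1 + x) * dlegP n x) + real j * ((1 + x)^j * legP n x))
      has_integral
      (1 + 1)^(Suc j) * legP n 1 - (1 + -1)^(Suc j) * legP n (-1)) {-1..1}"
    by (intro fundamental_theorem_of_calculus)
      (auto simp: has_real_derivative_iff_has_vector_derivative[symmetric] intro: DERIV_subset)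
  have "((\<lambda>x. real j * ((1 + x)^j * legP n x)) has_integral real j * legendre_moment j n) {-1..1}"
    unfolding legendre_moment_def
    by (intro has_integral_mult_right integrable_integral integrable_continuous_interval continuous_intros)
  from has_integral_diff[OF ftc this]
  have "((\<lambda>x. (1 + x)^j * (legP n x + (1 + x) * dlegP n x)) has_integral
      2^(j+1) - real j * legendre_moment j n) {-1..1}"
    by (simp add: legP_one)
  then show ?thesis by (rule integral_unique)
qed

lemma leg_functional_power:
  "leg_functional n (\<lambda>t. (1 + t)^j) = cos_moment j 0 / 2^j * real j * legendre_moment j n"
proof -
  have "integral {-1..1} (\<lambda>x. arcsine_integral (\<lambda>t. (1 + t)^j) x * (legP n x + (1 + x) * dlegP n x)) =
      integral {-1..1} (\<lambda>x. cos_moment j 0 / 2^j * ((1 + x)^j * (legP n x + (1 + x) * dlegP n x)))"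
    unfolding arcsine_integral_power by (rule integral_cong) simp
  also have "\<dots> = cos_moment j 0 / 2^j * integral {-1..1} (\<lambda>x. (1 + x)^j * (legP n x + (1 + x) * dlegP n x))"
    by (rule Henstock_Kurzweil_Integration.integral_mult_right)
  finally have "integral {-1..1} (\<lambda>x. arcsine_integral (\<lambda>t. (1 + t)^j) x * (legP n x + (1 + x) * dlegP n x)) =
      cos_moment j 0 / 2^j * integral {-1..1} (\<lambda>x. (1 + x)^j * (legP n x + (1 + x) * dlegP n x))" .
  then show ?thesis
    unfolding leg_functional_def integral_power_legP_deriv arcsine_integral_power
    by (simp add: algebra_simps)
qed

lemma cheb_functional_power:
  "cheb_functional n (\<lambda>t. (1 + t)^j) =
     2 / (2 * real n + 1) * (-1)^n * (real n * cos_moment j n - (real n + 1) * cos_moment j (n + 1))"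
  by (simp add: cheb_functional_def cos_coeff_def cos_moment_def)

lemma leg_functional_eq_cheb_functional_power:
  "leg_functional n (\<lambda>t. (1 + t)^j) = cheb_functional n (\<lambda>t. (1 + t)^j)"
proof -
  define B where "B m = real ((2 * j) choose (j + m))" for m
  have pos: "real j + real n + 1 > 0" "2 * real n + 1 > 0" by simp_all
  have "leg_functional n (\<lambda>t. (1 + t)^j) = pi * real j *
      (legendre_moment_formula j n * (real j + real n + 1) * real ((2 * j) choose j)) /
      ((real j + real n + 1) * 2^j * 2^j)"
    using pos unfolding leg_functional_power legendre_moment_eq_formula cos_moment_eq B_def
    by (simp add: divide_simps)
  also have "\<dots> = 2 * pi * real j * B n / ((real j + real n + 1) * 2^j)"
    unfolding B_def legendre_moment_formula_binomial by simp
  also have "\<dots> = 2 * pi / ((2 * real n + 1) * 2^j) * (real n * B n + (real n + 1) * B (Suc n))"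
  proof -
    have "(real j + real n + 1) * (real n * B n + (real n + 1) * B (Suc n)) =
        real n * (real j + real n + 1) * B n + (real n + 1) * ((real j + real n + 1) * B (Suc n))"
      by (simp add: algebra_simps)
    also have "\<dots> = real n * (real j + real n + 1) * B n + (real n + 1) * ((real j - real n) * B n)"
      unfolding B_def real_binomial_absorption ..
    also have "\<dots> = (2 * real n + 1) * real j * B n"
      by (simp add: algebra_simps)
    finally have "(real j + real n + 1) * (real n * B n + (real n + 1) * B (Suc n)) =
        (2 * real n + 1) * real j * B n" .
    with pos show ?thesis by (simp add: divide_simps) (simp add: algebra_simps)
  qed
  also have "\<dots> = cheb_functional n (\<lambda>t. (1 + t)^j)"
    unfolding cheb_functional_power cos_moment_eq B_def by (simp add: field_simps)
  finally show ?thesis .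
qed

lemma real_polynomial_function_imp_poly:
  fixes g :: "real \<Rightarrow> real"
  assumes "real_polynomial_function g"
  shows "\<exists>p. g = poly p"
  using assms
proof (induction rule: real_polynomial_function.induct)
  case (linear f)
  then obtain c where "f = (\<lambda>x. x * c)" using real_bounded_linear by blast
  then have "f = poly [:0, c:]" by (auto simp: fun_eq_iff)
  then show ?case by blast
next
  case (const c)
  have "(\<lambda>x::real. c) = poly [:c:]" by auto
  then show ?case by blast
next
  case (add f g)
  then obtain p q where "f = poly p" "g = poly q" by blast
  then have "(\<lambda>x. f x + g x) = poly (p + q)" by (auto simp: fun_eq_iff)
  then show ?case by blast
next
  case (mult f g)
  then obtain p q where "f = poly p" "g = poly q" by blast
  then have "(\<lambda>x. f x * g x) = poly (p * q)" by (auto simp: fun_eq_iff)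
  then show ?case by blast
qed

lemma linear_functional_poly_eq_0:
  fixes L :: "(real \<Rightarrow> real) \<Rightarrow> real"
  assumes linear: "\<And>c f g. continuous_on {a..b} f \<Longrightarrow> continuous_on {a..b} g \<Longrightarrow>
      L (\<lambda>t. c * f t + g t) = c * L f + L g"
    and powers: "\<And>j. L (\<lambda>t. (t - a)^j) = 0"
  shows "L (poly p) = 0"
proof -
  have sum: "L (\<lambda>t. \<Sum>i<N. c i * (t - a)^i) = 0" for N c
  proof (induction N)
    case 0
    have "L (\<lambda>t. 1 * 0 + 0) = 1 * L (\<lambda>t. 0) + L (\<lambda>t. 0)" by (rule linear) simp_all
    then show ?case by simp
  next
    case (Suc N)
    have "L (\<lambda>t. c N * (t - a)^N + (\<Sum>i<N. c i * (t - a)^i)) =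
        c N * L (\<lambda>t. (t - a)^N) + L (\<lambda>t. \<Sum>i<N. c i * (t - a)^i)"
      by (rule linear) (intro continuous_intros)+
    then show ?case using Suc.IH powers by (simp add: add.commute)
  qed
  define q where "q = pcompose p [:a, 1:]"
  have "poly p t = (\<Sum>i<Suc (degree q). coeff q i * (t - a)^i)" for t
  proof -
    have "poly p t = poly q (t - a)" by (simp add: q_def poly_pcompose)
    also have "\<dots> = (\<Sum>i\<le>degree q. coeff q i * (t - a)^i)" by (rule poly_altdef)
    finally show ?thesis by (simp add: lessThan_Suc_atMost)
  qed
  then have "poly p = (\<lambda>t. \<Sum>i<Suc (degree q). coeff q i * (t - a)^i)" by auto
  then show ?thesis using sum[of "coeff q" "Suc (degree q)"] by (simp only:)
qed

lemma bounded_functional_eq_0_if_poly: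
  fixes L :: "(real \<Rightarrow> real) \<Rightarrow> real"
  assumes additive: "\<And>f g. continuous_on {a..b} f \<Longrightarrow> continuous_on {a..b} g \<Longrightarrow>
      L (\<lambda>t. f t + g t) = L f + L g"
    and bounded: "\<And>h e. continuous_on {a..b} h \<Longrightarrow> (\<And>t. t \<in> {a..b} \<Longrightarrow> \<bar>h t\<bar> \<le> e) \<Longrightarrow> \<bar>L h\<bar> \<le> C * e"
    and poly: "\<And>p. L (poly p) = 0"
    and f: "continuous_on {a..b} f"
  shows "L f = 0"
proof -
  have approx: "\<bar>L f\<bar> \<le> C * e" if "e > 0" for e
  proof -
    obtain g where g: "real_polynomial_function g" "\<And>t. t \<in> {a..b} \<Longrightarrow> \<bar>f t - g t\<bar> < e"
      using Stone_Weierstrass_real_polynomial_function[OF compact_Icc f \<open>e > 0\<close>] by blast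
    obtain p where p: "g = poly p" using real_polynomial_function_imp_poly[OF g(1)] by blast
    have cont_diff: "continuous_on {a..b} (\<lambda>t. f t - poly p t)" by (intro continuous_intros f)
    have "L f = L (\<lambda>t. (f t - poly p t) + poly p t)" by simp
    also have "\<dots> = L (\<lambda>t. f t - poly p t)"
      using additive[OF cont_diff, of "poly p"] poly by (simp add: continuous_intros)
    finally show ?thesis
      using bounded[OF cont_diff, of e] g(2) p by (simp add: less_imp_le)
  qed
  have "C \<ge> 0" using approx[of 1] by linarith
  have "\<bar>L f\<bar> \<le> e" if "e > 0" for e
  proof -
    have "\<bar>L f\<bar> \<le> C * (e / (C + 1))" using \<open>C \<ge> 0\<close> that by (intro approx) simp
    also have "\<dots> \<le> e" using \<open>C \<ge> 0\<close> that by (simp add: field_simps)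
    finally show ?thesis .
  qed
  then show ?thesis by (metis abs_le_zero_iff field_le_epsilon add_0)
qed

lemma continuous_on_arcsine_integrand:
  assumes "continuous_on {-1..1} f" "x \<in> {-1..1}"
  shows "continuous_on {0..pi} (\<lambda>\<phi>. f (-1 + (1 + x) * (1 - cos \<phi>) / 2))"
  by (rule continuous_on_compose2[OF assms(1)])
    (use assms(2) arcsine_arg_mem in \<open>auto intro!: continuous_intros\<close>)

lemma continuous_on_cos_coeff_integrand:
  assumes "continuous_on {-1..1} f"
  shows "continuous_on {0..pi} (\<lambda>\<theta>. f (- cos \<theta>) * cos (real m * \<theta>))"
  by (intro continuous_intros continuous_on_compose2[OF assms]) auto

lemma arcsine_integral_linear:
  assumes f: "continuous_on {-1..1} f" and g: "continuous_on {-1..1} g" and x: "x \<in> {-1..1}"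
  shows "arcsine_integral (\<lambda>t. c * f t + g t) x = c * arcsine_integral f x + arcsine_integral g x"
proof -
  have "(\<lambda>\<phi>. c * f (-1 + (1 + x) * (1 - cos \<phi>) / 2)) integrable_on {0..pi}"
    by (intro integrable_continuous_interval continuous_intros continuous_on_arcsine_integrand[OF f x])
  moreover have "(\<lambda>\<phi>. g (-1 + (1 + x) * (1 - cos \<phi>) / 2)) integrable_on {0..pi}"
    by (intro integrable_continuous_interval continuous_on_arcsine_integrand[OF g x])
  ultimately show ?thesis unfolding arcsine_integral_def by (simp add: integral_add)
qed

lemma cos_coeff_linear:
  assumes f: "continuous_on {-1..1} f" and g: "continuous_on {-1..1} g"
  shows "cos_coeff (\<lambda>t. c * f t + g t) m = c * cos_coeff f m + cos_coeff g m"
proof -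
  have "cos_coeff (\<lambda>t. c * f t + g t) m =
      integral {0..pi} (\<lambda>\<theta>. c * (f (- cos \<theta>) * cos (real m * \<theta>)) + g (- cos \<theta>) * cos (real m * \<theta>))"
    unfolding cos_coeff_def by (rule integral_cong) (simp add: algebra_simps)
  also have "\<dots> = c * cos_coeff f m + cos_coeff g m"
    unfolding cos_coeff_def
    by (subst integral_add) (auto intro!: integrable_continuous_interval continuous_intros
        continuous_on_cos_coeff_integrand[OF f] continuous_on_cos_coeff_integrand[OF g])
  finally show ?thesis .
qed

lemma leg_functional_linear:
  assumes f: "continuous_on {-1..1} f" and g: "continuous_on {-1..1} g"
  shows "leg_functional n (\<lambda>t. c * f t + g t) = c * leg_functional n f + leg_functional n g"
proof -
  define R where "R x = legP n x + (1 + x) * dlegP n x" for x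
  have "integral {-1..1} (\<lambda>x. arcsine_integral (\<lambda>t. c * f t + g t) x * R x) =
      integral {-1..1} (\<lambda>x. c * (arcsine_integral f x * R x) + arcsine_integral g x * R x)"
    by (rule integral_cong) (simp only: arcsine_integral_linear[OF f g], simp add: algebra_simps)
  also have "\<dots> = c * integral {-1..1} (\<lambda>x. arcsine_integral f x * R x) +
      integral {-1..1} (\<lambda>x. arcsine_integral g x * R x)"
    unfolding R_def
    by (subst integral_add) (auto intro!: integrable_continuous_interval continuous_intros
        continuous_on_arcsine_integral[OF f] continuous_on_arcsine_integral[OF g])
  finally show ?thesis
    unfolding leg_functional_def R_def[symmetric] using arcsine_integral_linear[OF f g, of 1]
    by (simp add: algebra_simps)
qed

lemma cheb_functional_linear:
  assumes f: "continuous_on {-1..1} f" and g: "continuous_on {-1..1} g"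
  shows "cheb_functional n (\<lambda>t. c * f t + g t) = c * cheb_functional n f + cheb_functional n g"
proof -
  define K where "K = 2 / (2 * real n + 1) * (-1)^n"
  have "K * (real n * (c * X + Y) - (real n + 1) * (c * Z + W)) =
      c * (K * (real n * X - (real n + 1) * Z)) + K * (real n * Y - (real n + 1) * W)" for X Y Z W
    by (simp add: algebra_simps)
  then show ?thesis unfolding cheb_functional_def cos_coeff_linear[OF f g] K_def[symmetric] by simp
qed

lemma arcsine_integral_bound:
  assumes h: "continuous_on {-1..1} h" and bound: "\<And>t. t \<in> {-1..1} \<Longrightarrow> \<bar>h t\<bar> \<le> e"
    and x: "x \<in> {-1..1}"
  shows "\<bar>arcsine_integral h x\<bar> \<le> e * pi"
proof -
  have "norm (arcsine_integral h x) \<le> e * (pi - 0)" unfolding arcsine_integral_def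
    by (rule integral_bound)
      (use continuous_on_arcsine_integrand[OF h x] bound[OF arcsine_arg_mem[OF x]] in auto)
  then show ?thesis by simp
qed

lemma cos_coeff_bound:
  assumes h: "continuous_on {-1..1} h" and bound: "\<And>t. t \<in> {-1..1} \<Longrightarrow> \<bar>h t\<bar> \<le> e"
  shows "\<bar>cos_coeff h m\<bar> \<le> e * pi"
proof -
  have "norm (h (- cos t) * cos (real m * t)) \<le> e" for t
  proof -
    have "\<bar>h (- cos t)\<bar> * \<bar>cos (real m * t)\<bar> \<le> e * 1"
      using bound[of 0] by (intro mult_mono bound) auto
    then show ?thesis by (simp add: abs_mult)
  qed
  then have "norm (cos_coeff h m) \<le> e * (pi - 0)" unfolding cos_coeff_def
    by (intro integral_bound continuous_on_cos_coeff_integrand[OF h]) auto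
  then show ?thesis by simp
qed

lemma cheb_functional_bound:
  assumes h: "continuous_on {-1..1} h" and bound: "\<And>t. t \<in> {-1..1} \<Longrightarrow> \<bar>h t\<bar> \<le> e"
  shows "\<bar>cheb_functional n h\<bar> \<le> 2 * pi * e"
proof -
  have a: "\<bar>cos_coeff h n\<bar> \<le> e * pi" and b: "\<bar>cos_coeff h (n + 1)\<bar> \<le> e * pi"
    by (intro cos_coeff_bound[OF h bound], assumption)+
  have "\<bar>real n * cos_coeff h n - (real n + 1) * cos_coeff h (n + 1)\<bar> \<le>
      real n * \<bar>cos_coeff h n\<bar> + (real n + 1) * \<bar>cos_coeff h (n + 1)\<bar>"
    using abs_triangle_ineq4[of "real n * cos_coeff h n" "(real n + 1) * cos_coeff h (n + 1)"]
    by (simp add: abs_mult)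
  also have "\<dots> \<le> (2 * real n + 1) * (e * pi)"
    using mult_left_mono[OF a, of "real n"] mult_left_mono[OF b, of "real n + 1"] by (simp add: algebra_simps)
  finally show ?thesis
    unfolding cheb_functional_def by (simp add: abs_mult divide_simps mult.commute mult.left_commute)
qed

lemma leg_functional_bound:
  assumes h: "continuous_on {-1..1} h" and bound: "\<And>t. t \<in> {-1..1} \<Longrightarrow> \<bar>h t\<bar> \<le> e"
    and R: "\<And>x. x \<in> {-1..1} \<Longrightarrow> \<bar>legP n x + (1 + x) * dlegP n x\<bar> \<le> R"
  shows "\<bar>leg_functional n h\<bar> \<le> (2 * pi + 2 * pi * R) * e"
proof -
  have "norm (integral {-1..1} (\<lambda>x. arcsine_integral h x * (legP n x + (1 + x) * dlegP n x))) \<le>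
      (e * pi * R) * (1 - (-1))"
  proof (rule integral_bound)
    fix x :: real assume x: "x \<in> {-1..1}"
    show "norm (arcsine_integral h x * (legP n x + (1 + x) * dlegP n x)) \<le> e * pi * R"
      unfolding real_norm_def abs_mult using bound[of 0]
      by (intro mult_mono arcsine_integral_bound[OF h bound x] R[OF x]) auto
  qed (auto intro!: continuous_intros continuous_on_arcsine_integral[OF h])
  moreover have "\<bar>arcsine_integral h 1\<bar> \<le> e * pi" by (rule arcsine_integral_bound[OF h bound]) auto
  ultimately show ?thesis unfolding leg_functional_def by (simp add: algebra_simps)
qed

lemma leg_functional_eq_cheb_functional:
  assumes f: "continuous_on {-1..1} f"
  shows "leg_functional n f = cheb_functional n f"
proof -
  have "bounded ((\<lambda>x. legP n x + (1 + x) * dlegP n x) ` {-1..1})"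
    by (intro compact_imp_bounded compact_continuous_image compact_Icc continuous_intros)
  then obtain R where "\<forall>y \<in> (\<lambda>x. legP n x + (1 + x) * dlegP n x) ` {-1..1}. norm y \<le> R"
    unfolding bounded_iff by blast
  then have R: "\<And>x. x \<in> {-1..1} \<Longrightarrow> \<bar>legP n x + (1 + x) * dlegP n x\<bar> \<le> R" by auto
  define L where "L h = leg_functional n h - cheb_functional n h" for h
  have linear: "L (\<lambda>t. c * g t + h t) = c * L g + L h"
    if "continuous_on {-1..1} g" "continuous_on {-1..1} h" for c g h
    unfolding L_def leg_functional_linear[OF that] cheb_functional_linear[OF that] by (simp add: algebra_simps)
  have "L f = 0"
  proof (rule bounded_functional_eq_0_if_poly[OF _ _ _ f])
    show "L (\<lambda>t. g t + h t) = L g + L h"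
      if "continuous_on {-1..1} g" "continuous_on {-1..1} h" for g h
      using linear[OF that, of 1] by simp
    show "\<bar>L h\<bar> \<le> (4 * pi + 2 * pi * R) * e"
      if "continuous_on {-1..1} h" "\<And>t. t \<in> {-1..1} \<Longrightarrow> \<bar>h t\<bar> \<le> e" for h e
    proof -
      have "\<bar>L h\<bar> \<le> \<bar>leg_functional n h\<bar> + \<bar>cheb_functional n h\<bar>"
        unfolding L_def by (rule abs_triangle_ineq4)
      moreover have "(4 * pi + 2 * pi * R) * e = (2 * pi + 2 * pi * R) * e + 2 * pi * e"
        by (simp add: algebra_simps)
      ultimately show ?thesis
        using leg_functional_bound[OF that R] cheb_functional_bound[OF that, of n] by linarith
    qed
    show "L (poly p) = 0" for p
    proof (rule linear_functional_poly_eq_0[OF linear])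
      show "L (\<lambda>t. (t - -1)^j) = 0" for j
        using leg_functional_eq_cheb_functional_power[of n j] by (simp add: L_def add.commute)
    qed
  qed
  then show ?thesis by (simp add: L_def)
qed

lemma reflected_leg_functional:
  assumes f: "continuous_on {-1..1} f"
  shows "(-1)^n * leg_functional n (\<lambda>t. f (-t)) =
     2 / (2 * real n + 1) * (-1)^n * (real n * cos_coeff f n + (real n + 1) * cos_coeff f (n + 1))"
proof -
  define K where "K = 2 / (2 * real n + 1)"
  define s :: real where "s = (-1)^n"
  have s: "s * s = 1" unfolding s_def by (simp flip: power_add)
  have s_Suc: "(-1::real)^(n + 1) = - s" by (simp add: s_def)
  have f_reflect: "continuous_on {-1..1} (\<lambda>t. f (-t))"
    by (rule continuous_on_compose2[OF f]) (auto intro!: continuous_intros)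
  have "s * leg_functional n (\<lambda>t. f (-t)) =
      K * (s * s) * s * (real n * cos_coeff f n + (real n + 1) * cos_coeff f (n + 1))"
    unfolding leg_functional_eq_cheb_functional[OF f_reflect] cheb_functional_def cos_coeff_reflect[OF f] s_Suc
    unfolding K_def[symmetric] s_def[symmetric]
    by (simp add: algebra_simps)
  then show ?thesis unfolding s K_def s_def by simp
qed

lemma leg_coeff_calD_plus:
  assumes f: "continuous_on {-1..1} f"
    and diff_plus: "\<forall>x\<in>{-1<..<1}. Dplus_inner 0 f differentiable (at x)"
    and diff_minus: "\<forall>x\<in>{-1<..<1}. Dminus_inner 0 f differentiable (at x)"
  shows "leg_coeff (calD_plus 0 f) n = - 2 * (real n + 1) * (-1)^n * cos_coeff f (n + 1)"
proof -
  define K where "K = 2 / (2 * real n + 1)"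
  define s :: real where "s = (-1)^n"
  have "((\<lambda>x. calD_plus 0 f x * legP n x) has_integral
      leg_functional n f - (-1)^n * leg_functional n (\<lambda>t. f (-t))) {-1..1}"
    using has_integral_add[OF has_integral_Dplus_legP[OF f diff_plus] has_integral_Dminus_legP[OF f diff_minus]]
    by (simp add: calD_plus_def distrib_right)
  also have "leg_functional n f - (-1)^n * leg_functional n (\<lambda>t. f (-t)) =
      K * (s * (- 2 * (real n + 1) * cos_coeff f (n + 1)))"
    unfolding reflected_leg_functional[OF f] leg_functional_eq_cheb_functional[OF f] cheb_functional_def
    unfolding K_def[symmetric] s_def[symmetric]
    by (simp add: algebra_simps)
  finally have "leg_coeff (calD_plus 0 f) n =
      ((2 * real n + 1) / 2 * K) * (s * (- 2 * (real n + 1) * cos_coeff f (n + 1)))"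
    unfolding leg_coeff_def by (simp add: integral_unique)
  moreover have "(2 * real n + 1) / 2 * K = 1" unfolding K_def by (simp add: add_nonneg_eq_0_iff)
  ultimately show ?thesis by (simp add: s_def)
qed

lemma leg_coeff_calD_minus:
  assumes f: "continuous_on {-1..1} f"
    and diff_plus: "\<forall>x\<in>{-1<..<1}. Dplus_inner 0 f differentiable (at x)"
    and diff_minus: "\<forall>x\<in>{-1<..<1}. Dminus_inner 0 f differentiable (at x)"
  shows "leg_coeff (calD_minus 0 f) n = 2 * real n * (-1)^n * cos_coeff f n"
proof -
  define K where "K = 2 / (2 * real n + 1)"
  define s :: real where "s = (-1)^n"
  have "((\<lambda>x. calD_minus 0 f x * legP n x) has_integral
      leg_functional n f + (-1)^n * leg_functional n (\<lambda>t. f (-t))) {-1..1}"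
    using has_integral_diff[OF has_integral_Dplus_legP[OF f diff_plus] has_integral_Dminus_legP[OF f diff_minus]]
    by (simp add: calD_minus_def left_diff_distrib)
  also have "leg_functional n f + (-1)^n * leg_functional n (\<lambda>t. f (-t)) =
      K * (s * (2 * real n * cos_coeff f n))"
    unfolding reflected_leg_functional[OF f] leg_functional_eq_cheb_functional[OF f] cheb_functional_def
    unfolding K_def[symmetric] s_def[symmetric]
    by (simp add: algebra_simps)
  finally have "leg_coeff (calD_minus 0 f) n =
      ((2 * real n + 1) / 2 * K) * (s * (2 * real n * cos_coeff f n))"
    unfolding leg_coeff_def by (simp add: integral_unique)
  moreover have "(2 * real n + 1) / 2 * K = 1" unfolding K_def by (simp add: add_nonneg_eq_0_iff)
  ultimately show ?thesis by (simp add: s_def)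
qed

theorem theorem2p7:
  fixes f :: "real \<Rightarrow> real"
  assumes cont: "continuous_on {-1..1} f"
    and ac: "abs_cont_on_interval (-1) 1 f"
    and diff_plus: "\<forall>x\<in>{-1<..<1}. Dplus_inner 0 f differentiable (at x)"
    and diff_minus: "\<forall>x\<in>{-1<..<1}. Dminus_inner 0 f differentiable (at x)"
    and Cplus: "\<exists>F. continuous_on {-1..1} F \<and> (\<forall>x\<in>{-1<..<1}. F x = calD_plus 0 f x)"
    and Cminus: "\<exists>G. continuous_on {-1..1} G \<and> (\<forall>x\<in>{-1<..<1}. G x = calD_minus 0 f x)"
  shows "(\<forall>n. leg_coeff (calD_plus 0 f) n = real (n + 1) * pi * cheb_coeff f (n + 1)) \<and>
         (\<forall>n. leg_coeff (calD_minus 0 f) n = real n * pi * cheb_coeff f n)"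
proof (intro conjI allI)
  fix n
  show "leg_coeff (calD_plus 0 f) n = real (n + 1) * pi * cheb_coeff f (n + 1)"
    unfolding leg_coeff_calD_plus[OF cont diff_plus diff_minus] cheb_coeff_eq_cos_coeff[OF cont]
    by (simp add: field_simps)
  show "leg_coeff (calD_minus 0 f) n = real n * pi * cheb_coeff f n"
    unfolding leg_coeff_calD_minus[OF cont diff_plus diff_minus] cheb_coeff_eq_cos_coeff[OF cont]
    by (cases "n = 0") simp_all
qed

end
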